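(* For all non-negative integers $k$ and $n$, every weak embedding $f$ of $L_2(k)$ into $L_2(n)$ is distance-preserving: for all $x,y\in L_2(k)$, the distance between $x$ and $y$ in the Hasse diagram of $L_2(k)$ equals the distance between $f(x)$ and $f(y)$ in the Hasse diagram of $L_2(n)$.
   Context: $B_m$ denotes the Boolean lattice of all subsets of $\{1,\dots,m\}$ ordered by inclusion; its $j$-th level is the family of $j$-element subsets. $L_2(m)$ denotes the subposet of $B_m$ induced by the union of its two middle levels, namely levels $\lfloor (m-1)/2\rfloor$ and $\lfloor (m+1)/2\rfloor$. An injective map $f$ from a poset $P$ to a poset $Q$ is a weak embedding if $p\le q$ implies $f(p)\le f(q)$. The Hasse diagram of a poset is the graph on its elements in which $p,q$ are adjacent iff one covers the other (they are comparable and no element lies strictly between them); distance means graph distance in the Hasse diagram. *)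

theory Defs
  imports Main "HOL-Library.Extended_Nat"
begin

definition level :: "nat \<Rightarrow> nat \<Rightarrow> nat set set" where
  "level m j = {A. A \<subseteq> {1..m} \<and> card A = j}"

text \<open>L_2(m): union of levels floor((m-1)/2) and floor((m+1)/2) (computed over the integers;
  a negative level is empty), ordered by inclusion.\<close>
definition L2 :: "nat \<Rightarrow> nat set set" where
  "L2 m = {A. A \<subseteq> {1..m} \<and>
     (int (card A) = \<lfloor>(real m - 1) / 2\<rfloor> \<or> int (card A) = \<lfloor>(real m + 1) / 2\<rfloor>)}"

definition covers :: "'a set set \<Rightarrow> 'a set \<Rightarrow> 'a set \<Rightarrow> bool" where
  "covers P p q \<longleftrightarrow> p \<in> P \<and> q \<in> P \<and> p \<subset> q \<and> \<not> (\<exists>r\<in>P. p \<subset> r \<and> r \<subset> q)"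

definition hasse_adj :: "'a set set \<Rightarrow> 'a set \<Rightarrow> 'a set \<Rightarrow> bool" where
  "hasse_adj P p q \<longleftrightarrow> covers P p q \<or> covers P q p"

text \<open>Graph distance in the Hasse diagram (infinity if no path).\<close>
definition hasse_dist :: "'a set set \<Rightarrow> 'a set \<Rightarrow> 'a set \<Rightarrow> enat" where
  "hasse_dist P x y = (INF n \<in> {n. \<exists>g :: nat \<Rightarrow> 'a set. g 0 = x \<and> g n = y \<and>
       (\<forall>i<n. hasse_adj P (g i) (g (Suc i)))}. enat n)"

definition weak_embedding :: "'a set set \<Rightarrow> 'b set set \<Rightarrow> ('a set \<Rightarrow> 'b set) \<Rightarrow> bool" where
  "weak_embedding P Q f \<longleftrightarrow> f ` P \<subseteq> Q \<and> inj_on f P \<and>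
     (\<forall>p\<in>P. \<forall>q\<in>P. p \<subseteq> q \<longrightarrow> f p \<subseteq> f q)"

end

theory Submission
  imports Defs
begin

text \<open>In the Hasse diagram of two consecutive levels of a Boolean lattice, adjacent sets differ
  in one element, and from any set one can step to a set one element closer to any other; so the
  distance between two sets is the size of their symmetric difference. A weak embedding \<open>f\<close> of
  levels \<open>j, j + 1\<close> of \<open>B\<^sub>k\<close> with \<open>2 j < k\<close> into two consecutive levels sends the lower level to the
  lower one and satisfies \<open>f (x \<union> {a}) = f x \<union> {\<sigma> a}\<close> for lower \<open>x\<close>, with \<open>\<sigma> a\<close> independent of
  \<open>x\<close>: the hexagon spanned by \<open>x - {b}\<close> and \<open>a, b, c\<close> forces this to survive an exchange
  \<open>x \<mapsto> x - {b} \<union> {c}\<close>, and exchanges connect the lower level. It follows that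
  \<open>f A = \<sigma> ` A \<union> C\<close> with \<open>\<sigma>\<close> injective and \<open>C\<close> disjoint from its range, so \<open>f\<close> preserves
  symmetric differences and hence distances.\<close>

abbreviation consecutive_levels :: "nat \<Rightarrow> nat \<Rightarrow> nat set set" where
  "consecutive_levels m j \<equiv> level m j \<union> level m (Suc j)"

text \<open>With truncated subtraction, \<open>m = 0\<close> gives \<open>level 0 0 \<union> level 0 1 = {{}}\<close>, which is \<open>L2 0\<close>.\<close>

lemma L2_eq_consecutive_levels: "L2 m = consecutive_levels m ((m - 1) div 2)"
proof (cases "m = 0")
  case True
  then show ?thesis by (auto simp: L2_def level_def)
next
  case False
  have "\<lfloor>(real m - 1) / 2\<rfloor> = int ((m - 1) div 2)"
    using False floor_divide_of_nat_eq[where 'a=real, of "m - 1" 2] by (simp add: of_nat_diff)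
  moreover have "\<lfloor>(real m + 1) / 2\<rfloor> = int ((m + 1) div 2)"
    using floor_divide_of_nat_eq[where 'a=real, of "m + 1" 2] by (simp add: add.commute)
  moreover have "(m + 1) div 2 = Suc ((m - 1) div 2)"
    using False by arith
  ultimately show ?thesis by (auto simp: L2_def level_def)
qed

lemma finite_level: "A \<in> level m j \<Longrightarrow> finite A"
  unfolding level_def by (auto intro: finite_subset)

lemma insert_in_level: "A \<in> level m j \<Longrightarrow> a \<in> {1..m} \<Longrightarrow> a \<notin> A \<Longrightarrow> insert a A \<in> level m (Suc j)"
  using finite_level[of A m j] by (simp add: level_def)

lemma Diff_in_level: "A \<in> level m (Suc j) \<Longrightarrow> a \<in> A \<Longrightarrow> A - {a} \<in> level m j"
  unfolding level_def by (simp add: card_Diff_singleton subset_iff)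

lemma exchange_in_level:
  assumes "A \<in> level m j" "b \<in> A" "c \<in> {1..m}" "c \<notin> A"
  shows "insert c (A - {b}) \<in> level m j"
proof -
  have "insert c A - {b} \<in> level m j"
    using Diff_in_level[OF insert_in_level[OF assms(1,3,4)]] assms(2) by blast
  moreover have "insert c A - {b} = insert c (A - {b})"
    using assms(2,4) by blast
  ultimately show ?thesis
    by simp
qed

lemma exists_not_in_level:
  assumes "A \<in> level m j" "j < m"
  obtains a where "a \<in> {1..m}" "a \<notin> A"
proof -
  have "\<not> {1..m} \<subseteq> A"
  proof
    assume "{1..m} \<subseteq> A"
    then have "card {1..m} \<le> card A"
      by (rule card_mono[OF finite_level[OF assms(1)]])
    then show False
      using assms unfolding level_def by simp
  qed
  then show thesis
    using that by blast
qed

lemma exists_level_disjoint: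
  assumes "B \<subseteq> {1..m}" "j + card B \<le> m"
  obtains x where "x \<in> level m j" "x \<inter> B = {}"
proof -
  have "card ({1..m} - B) = m - card B"
    using assms(1) by (simp add: card_Diff_subset finite_subset)
  then have "j \<le> card ({1..m} - B)"
    using assms(2) by simp
  then obtain x where "x \<subseteq> {1..m} - B" "card x = j"
    by (rule obtain_subset_with_card_n)
  then show thesis
    using that unfolding level_def by blast
qed

definition hasse_walk :: "'a set set \<Rightarrow> nat \<Rightarrow> 'a set \<Rightarrow> 'a set \<Rightarrow> bool" where
  "hasse_walk P n x y \<longleftrightarrow>
     (\<exists>g. g 0 = x \<and> g n = y \<and> (\<forall>i<n. hasse_adj P (g i) (g (Suc i))))"

lemma hasse_dist_eq_INF_walk: "hasse_dist P x y = (INF n \<in> {n. hasse_walk P n x y}. enat n)"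
  unfolding hasse_dist_def hasse_walk_def ..

lemma hasse_walk_0_iff [simp]: "hasse_walk P 0 x y \<longleftrightarrow> x = y"
  unfolding hasse_walk_def by auto

lemma hasse_walk_Suc_iff:
  "hasse_walk P (Suc n) x y \<longleftrightarrow> (\<exists>z. hasse_adj P x z \<and> hasse_walk P n z y)"
proof
  assume "hasse_walk P (Suc n) x y"
  then obtain g where "g 0 = x" "g (Suc n) = y" "\<forall>i<Suc n. hasse_adj P (g i) (g (Suc i))"
    unfolding hasse_walk_def by blast
  then have "hasse_adj P x (g 1) \<and> hasse_walk P n (g 1) y"
    unfolding hasse_walk_def by (intro conjI exI[of _ "\<lambda>i. g (Suc i)"]) auto
  then show "\<exists>z. hasse_adj P x z \<and> hasse_walk P n z y" ..
next
  assume "\<exists>z. hasse_adj P x z \<and> hasse_walk P n z y"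
  then obtain z g where "hasse_adj P x z" "g 0 = z" "g n = y" "\<forall>i<n. hasse_adj P (g i) (g (Suc i))"
    unfolding hasse_walk_def by blast
  then show "hasse_walk P (Suc n) x y"
    unfolding hasse_walk_def
    by (intro exI[of _ "\<lambda>i. case i of 0 \<Rightarrow> x | Suc i \<Rightarrow> g i"]) (auto split: nat.split)
qed

lemma hasse_dist_eqI:
  assumes "hasse_walk P m x y" and "\<And>n. hasse_walk P n x y \<Longrightarrow> m \<le> n"
  shows "hasse_dist P x y = enat m"
  unfolding hasse_dist_eq_INF_walk
proof (rule antisym)
  show "(INF n \<in> {n. hasse_walk P n x y}. enat n) \<le> enat m"
    using assms(1) by (intro INF_lower) simp
  show "enat m \<le> (INF n \<in> {n. hasse_walk P n x y}. enat n)"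
    using assms(2) by (intro INF_greatest) simp
qed

lemma hasse_dist_self [simp]: "hasse_dist P x x = 0"
  using hasse_dist_eqI[of P 0 x x] by (simp add: zero_enat_def)

lemma consecutive_levels_psubsetD:
  assumes "p \<in> consecutive_levels m j" "q \<in> consecutive_levels m j" "p \<subset> q"
  shows "p \<in> level m j" "q \<in> level m (Suc j)"
proof -
  have "card p < card q"
    using assms finite_level psubset_card_mono by blast
  then show "p \<in> level m j" "q \<in> level m (Suc j)"
    using assms(1,2) unfolding level_def by auto
qed

lemma covers_consecutive_levels:
  "covers (consecutive_levels m j) p q \<longleftrightarrow>
     p \<in> consecutive_levels m j \<and> q \<in> consecutive_levels m j \<and> p \<subset> q"
proof -
  have "\<not> (p \<subset> r \<and> r \<subset> q)"
    if "p \<in> consecutive_levels m j" "q \<in> consecutive_levels m j" "r \<in> consecutive_levels m j" for r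
  proof
    assume "p \<subset> r \<and> r \<subset> q"
    then have "r \<in> level m (Suc j)" "r \<in> level m j"
      using consecutive_levels_psubsetD[of p m j r] consecutive_levels_psubsetD[of r m j q] that by blast+
    then show False
      by (simp add: level_def)
  qed
  then show ?thesis
    unfolding covers_def by blast
qed

lemma hasse_adj_consecutive_levels:
  "hasse_adj (consecutive_levels m j) p q \<longleftrightarrow>
     p \<in> consecutive_levels m j \<and> q \<in> consecutive_levels m j \<and> (p \<subset> q \<or> q \<subset> p)"
  unfolding hasse_adj_def covers_consecutive_levels by blast

lemma card_sym_diff_hasse_adj:
  assumes "hasse_adj (consecutive_levels m j) p q"
  shows "card (sym_diff p q) = 1"
proof -
  have psubset: "card (sym_diff p q) = 1"
    if "p \<in> consecutive_levels m j" "q \<in> consecutive_levels m j" "p \<subset> q" for p q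
  proof -
    have "p \<in> level m j" "q \<in> level m (Suc j)"
      using consecutive_levels_psubsetD[OF that] by blast+
    then have "finite p" "card q = Suc (card p)"
      using finite_level[of p m j] by (simp_all add: level_def)
    moreover have "sym_diff p q = q - p"
      using that(3) by blast
    ultimately show ?thesis
      using that(3) card_Diff_subset[of p q] by simp
  qed
  have "sym_diff q p = sym_diff p q"
    by blast
  moreover have "p \<in> consecutive_levels m j" "q \<in> consecutive_levels m j" "p \<subset> q \<or> q \<subset> p"
    using assms unfolding hasse_adj_consecutive_levels by blast+
  ultimately show ?thesis
    using psubset[of p q] psubset[of q p] by argo
qed

lemma card_sym_diff_le_walk:
  assumes "y \<in> consecutive_levels m j" "hasse_walk (consecutive_levels m j) n x y"
  shows "card (sym_diff x y) \<le> n"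
  using assms(2)
proof (induction n arbitrary: x)
  case 0
  then show ?case by simp
next
  case (Suc n)
  then obtain z where z: "hasse_adj (consecutive_levels m j) x z"
    "hasse_walk (consecutive_levels m j) n z y"
    unfolding hasse_walk_Suc_iff by blast
  have "finite x" "finite z" "finite y"
    using z(1) assms(1) finite_level unfolding hasse_adj_consecutive_levels by blast+
  then have "card (sym_diff x y) \<le> card (sym_diff x z \<union> sym_diff z y)"
    by (intro card_mono) auto
  also have "\<dots> \<le> card (sym_diff x z) + card (sym_diff z y)"
    by (rule card_Un_le)
  also have "\<dots> \<le> Suc n"
    using card_sym_diff_hasse_adj[OF z(1)] Suc.IH[OF z(2)] by simp
  finally show ?case .
qed

lemma exists_hasse_adj_closer:
  assumes x: "x \<in> consecutive_levels m j" and y: "y \<in> consecutive_levels m j" and "x \<noteq> y"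
  obtains z e where "hasse_adj (consecutive_levels m j) x z" "e \<in> sym_diff x y"
    "sym_diff z y = sym_diff x y - {e}"
proof (cases "x \<in> level m j")
  case True
  have "\<not> y \<subset> x"
  proof
    assume "y \<subset> x"
    then have "x \<in> level m (Suc j)"
      by (rule consecutive_levels_psubsetD(2)[OF y x])
    then show False
      using True by (simp add: level_def)
  qed
  then obtain e where e: "e \<in> y" "e \<notin> x"
    using \<open>x \<noteq> y\<close> by blast
  then have "insert e x \<in> level m (Suc j)"
    using True y insert_in_level[of x m j e] unfolding level_def by blast
  then have "hasse_adj (consecutive_levels m j) x (insert e x)"
    unfolding hasse_adj_consecutive_levels using x e by blast
  moreover have "sym_diff (insert e x) y = sym_diff x y - {e}"
    using e by blast
  ultimately show thesis
    using that e by blast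
next
  case False
  then have upper: "x \<in> level m (Suc j)"
    using x by blast
  have "\<not> x \<subset> y"
  proof
    assume "x \<subset> y"
    then have "x \<in> level m j"
      by (rule consecutive_levels_psubsetD(1)[OF x y])
    then show False
      using False by blast
  qed
  then obtain e where e: "e \<in> x" "e \<notin> y"
    using \<open>x \<noteq> y\<close> by blast
  then have "x - {e} \<in> level m j"
    using Diff_in_level upper by blast
  then have "hasse_adj (consecutive_levels m j) x (x - {e})"
    unfolding hasse_adj_consecutive_levels using x e by blast
  moreover have "sym_diff (x - {e}) y = sym_diff x y - {e}"
    using e by blast
  ultimately show thesis
    using that e by blast
qed

lemma hasse_walk_consecutive_levels:
  assumes "x \<in> consecutive_levels m j" "y \<in> consecutive_levels m j"
  shows "hasse_walk (consecutive_levels m j) (card (sym_diff x y)) x y"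
proof -
  have "finite y"
    using assms(2) finite_level by blast
  have "hasse_walk (consecutive_levels m j) N x y"
    if "x \<in> consecutive_levels m j" "card (sym_diff x y) = N" for N x
    using that
  proof (induction N arbitrary: x)
    case 0
    then have "finite x"
      using finite_level by blast
    then have "sym_diff x y = {}"
      using 0 \<open>finite y\<close> by simp
    then show ?case
      by auto
  next
    case (Suc N)
    then have "x \<noteq> y" "finite x"
      using finite_level by auto
    then obtain z e where z: "hasse_adj (consecutive_levels m j) x z" "e \<in> sym_diff x y"
      "sym_diff z y = sym_diff x y - {e}"
      using exists_hasse_adj_closer[OF Suc.prems(1) assms(2)] by blast
    then have "card (sym_diff z y) = N"
      using Suc.prems(2) by (simp add: card_Diff_singleton)
    moreover have "z \<in> consecutive_levels m j"
      using z(1) hasse_adj_consecutive_levels by blast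
    ultimately have "hasse_walk (consecutive_levels m j) N z y"
      by (rule Suc.IH[rotated])
    then show ?case
      unfolding hasse_walk_Suc_iff using z(1) by blast
  qed
  then show ?thesis
    using assms(1) by blast
qed

theorem hasse_dist_consecutive_levels:
  assumes "x \<in> consecutive_levels m j" "y \<in> consecutive_levels m j"
  shows "hasse_dist (consecutive_levels m j) x y = enat (card (sym_diff x y))"
  using hasse_walk_consecutive_levels[OF assms] card_sym_diff_le_walk[OF assms(2)]
  by (rule hasse_dist_eqI)

lemma same_card_exchange_induct [consumes 3, case_names base exchange]:
  assumes "finite x" "finite y" "card x = card y"
    and base: "P y"
    and exchange: "\<And>x b c. finite x \<Longrightarrow> card x = card y \<Longrightarrow> b \<in> x - y \<Longrightarrow> c \<in> y - x \<Longrightarrow>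
      P (insert c (x - {b})) \<Longrightarrow> P x"
  shows "P x"
proof -
  have "P x" if "finite x" "card x = card y" "card (x - y) = N" for N x
    using that
  proof (induction N arbitrary: x)
    case 0
    then have "x \<subseteq> y"
      by simp
    then have "x = y"
      using card_subset_eq[OF \<open>finite y\<close>] 0 by blast
    then show ?case
      using base by simp
  next
    case (Suc N)
    then obtain b where b: "b \<in> x - y"
      by (metis card.empty ex_in_conv nat.distinct(1))
    have "\<not> y \<subseteq> x"
    proof
      assume "y \<subseteq> x"
      then have "y = x"
        using card_subset_eq[OF \<open>finite x\<close>] Suc.prems(2) by simp
      then show False
        using b by blast
    qed
    then obtain c where c: "c \<in> y - x"
      by blast
    have "card (insert c (x - {b})) = card x"
      using Suc.prems(1) b c card_gt_0_iff[of x] by (auto simp: card_Diff_singleton)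
    moreover have "insert c (x - {b}) - y = (x - y) - {b}"
      using c by blast
    ultimately have "P (insert c (x - {b}))"
      using Suc.IH Suc.prems b by (simp add: card_Diff_singleton)
    then show ?case
      using exchange Suc.prems b c by blast
  qed
  then show ?thesis
    using assms by blast
qed

lemma Un_eq_if_card_Suc:
  assumes "finite U" "card U = Suc c" "A \<subseteq> U" "B \<subseteq> U" "card A = c" "card B = c" "A \<noteq> B"
  shows "A \<union> B = U"
proof -
  have fin: "finite B" "finite (A \<union> B)"
    using assms(1,3,4) finite_subset by blast+
  have "\<not> A \<subseteq> B"
  proof
    assume "A \<subseteq> B"
    then have "A = B"
      using card_subset_eq[OF fin(1)] assms(5,6) by simp
    then show False
      using assms(7) by contradiction
  qed
  then have "B \<subset> A \<union> B"
    by blast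
  then have "card B < card (A \<union> B)"
    by (rule psubset_card_mono[OF fin(2)])
  then have "card U \<le> card (A \<union> B)"
    using assms(2,6) by simp
  moreover have "A \<union> B \<subseteq> U"
    using assms(3,4) by blast
  ultimately show ?thesis
    using card_seteq[OF assms(1)] by blast
qed

lemma hexagon_Diff_eq:
  assumes fin: "finite Uab" "finite Uac" "finite Ubc"
    and card: "card La = c" "card Lb = c" "card Lc = c"
      "card Uab = Suc c" "card Uac = Suc c" "card Ubc = Suc c"
    and sub: "La \<union> Lb \<subseteq> Uab" "La \<union> Lc \<subseteq> Uac" "Lb \<union> Lc \<subseteq> Ubc"
    and ne: "La \<noteq> Lb" "La \<noteq> Lc" "Uab \<noteq> Ubc"
  shows "Uab - Lb = Uac - Lc"
proof -
  have Uab: "La \<union> Lb = Uab"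
    using sub(1) by (intro Un_eq_if_card_Suc[OF fin(1) card(4) _ _ card(1,2) ne(1)]) blast+
  have "finite Lb" "finite Lc"
    using fin(1,2) sub(1,2) finite_subset by blast+
  then have "card (Uab - Lb) = 1" "card (Uac - Lc) = 1"
    using sub(1,2) card by (simp_all add: card_Diff_subset)
  then obtain p q where p: "Uab - Lb = {p}" and q: "Uac - Lc = {q}"
    by (meson card_1_singletonE)
  have "p = q"
  proof (rule ccontr)
    assume "p \<noteq> q"
    moreover have "p \<in> La"
      using p Uab by blast
    ultimately have "p \<in> Lc"
      using q sub(2) by blast
    moreover have "Uab \<subseteq> Lb \<union> {p}"
      using p Diff_subset_conv[of Uab Lb "{p}"] by simp
    ultimately have "Uab \<subseteq> Ubc"
      using sub(3) by blast
    then have "Uab = Ubc"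
      using card_seteq[OF fin(3)] card(4,6) by simp
    then show False
      using ne(3) by contradiction
  qed
  then show ?thesis
    using p q by simp
qed

lemma card_sym_diff_image_Un:
  assumes "inj_on g U" "A \<subseteq> U" "B \<subseteq> U" "C \<inter> g ` U = {}"
  shows "card (sym_diff (g ` A \<union> C) (g ` B \<union> C)) = card (sym_diff A B)"
proof -
  have "sym_diff (g ` A \<union> C) (g ` B \<union> C) = g ` sym_diff A B"
    using assms inj_on_image_set_diff[OF assms(1)] by blast
  also have "card \<dots> = card (sym_diff A B)"
    using assms(1-3) by (intro card_image inj_on_subset[OF assms(1)]) blast
  finally show ?thesis .
qed

locale consecutive_levels_embedding =
  fixes k j n i :: nat and f :: "nat set \<Rightarrow> nat set"
  assumes weak_embedding: "weak_embedding (consecutive_levels k j) (consecutive_levels n i) f"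
    and below_middle: "2 * j < k"
begin

lemma image_subset: "f ` consecutive_levels k j \<subseteq> consecutive_levels n i"
  and inj_on_f: "inj_on f (consecutive_levels k j)"
  and image_mono: "A \<in> consecutive_levels k j \<Longrightarrow> B \<in> consecutive_levels k j \<Longrightarrow> A \<subseteq> B \<Longrightarrow> f A \<subseteq> f B"
  using weak_embedding unfolding weak_embedding_def by simp_all

lemma image_in: "A \<in> consecutive_levels k j \<Longrightarrow> f A \<in> consecutive_levels n i"
  using image_subset by (rule subsetD) (rule imageI)

lemma image_psubset:
  assumes "A \<in> consecutive_levels k j" "B \<in> consecutive_levels k j" "A \<subset> B"
  shows "f A \<subset> f B"
proof -
  have "f A \<noteq> f B"
    using inj_on_eq_iff[OF inj_on_f assms(1,2)] assms(3) by simp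
  then show ?thesis
    using image_mono[OF assms(1,2)] assms(3) by blast
qed

lemma image_psubset_eq_insert:
  assumes "A \<in> consecutive_levels k j" "B \<in> consecutive_levels k j" "A \<subset> B"
  obtains p where "p \<notin> f A" "f B = insert p (f A)"
proof -
  have fAB: "f A \<subset> f B"
    by (rule image_psubset[OF assms])
  then have "f A \<in> level n i" "f B \<in> level n (Suc i)"
    by (rule consecutive_levels_psubsetD[OF image_in[OF assms(1)] image_in[OF assms(2)]])+
  then have "finite (f A)" "card (f B) = Suc (card (f A))"
    using finite_level[of "f A" n i] by (simp_all add: level_def)
  then have "card (f B - f A) = 1"
    using fAB by (simp add: card_Diff_subset)
  then obtain p where "f B - f A = {p}"
    by (meson card_1_singletonE)
  then show thesis
    using that fAB by blast
qed

lemma j_less_k: "j < k"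
  using below_middle by simp

lemma image_lower_level:
  assumes "A \<in> level k j"
  shows "f A \<in> level n i"
proof -
  obtain a where a: "a \<in> {1..k}" "a \<notin> A"
    by (rule exists_not_in_level[OF assms j_less_k])
  have "insert a A \<in> level k (Suc j)"
    by (rule insert_in_level[OF assms a])
  then have in_levels: "A \<in> consecutive_levels k j" "insert a A \<in> consecutive_levels k j"
    using assms by simp_all
  have "f A \<subset> f (insert a A)"
    by (rule image_psubset[OF in_levels]) (use a(2) in blast)
  then show ?thesis
    by (rule consecutive_levels_psubsetD(1)[OF image_in[OF in_levels(1)] image_in[OF in_levels(2)]])
qed

lemma image_upper_level:
  assumes "A \<in> level k (Suc j)"
  shows "f A \<in> level n (Suc i)"
proof -
  have "A \<noteq> {}"
    using assms by (auto simp: level_def)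
  then obtain a where a: "a \<in> A"
    by blast
  then have "A - {a} \<in> level k j"
    by (rule Diff_in_level[OF assms])
  then have in_levels: "A - {a} \<in> consecutive_levels k j" "A \<in> consecutive_levels k j"
    using assms by simp_all
  have "f (A - {a}) \<subset> f A"
    by (rule image_psubset[OF in_levels]) (use a in blast)
  then show ?thesis
    by (rule consecutive_levels_psubsetD(2)[OF image_in[OF in_levels(1)] image_in[OF in_levels(2)]])
qed

lemma image_insert_Diff_exchange:
  assumes x: "x \<in> level k j" and b: "b \<in> x"
    and a: "a \<in> {1..k}" "a \<notin> x" and c: "c \<in> {1..k}" "c \<notin> x" and "a \<noteq> c"
  shows "f (insert a x) - f x = f (insert a (insert c (x - {b}))) - f (insert c (x - {b}))"
proof -
  define S where "S = x - {b}"
  have x_eq: "x = insert b S" and "a \<notin> S" "c \<notin> S"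
    using a c b unfolding S_def by blast+
  have lower: "insert a S \<in> level k j" "insert c S \<in> level k j"
    unfolding S_def by (rule exchange_in_level[OF x b a], rule exchange_in_level[OF x b c])
  have upper: "insert a x \<in> level k (Suc j)" "insert c x \<in> level k (Suc j)"
    "insert a (insert c S) \<in> level k (Suc j)"
    by (rule insert_in_level[OF x a], rule insert_in_level[OF x c],
        rule insert_in_level[OF lower(2) a(1)]) (use \<open>a \<notin> S\<close> \<open>a \<noteq> c\<close> in blast)
  note levels = lower x upper
  have fin: "finite (f A)" if "A \<in> level k (Suc j)" for A
    using finite_level image_upper_level[OF that] by blast
  have card_lower: "card (f A) = i" if "A \<in> level k j" for A
    using image_lower_level[OF that] by (simp add: level_def)
  have card_upper: "card (f A) = Suc i" if "A \<in> level k (Suc j)" for A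
    using image_upper_level[OF that] by (simp add: level_def)
  have sub: "f A \<subseteq> f B" if "A \<in> level k j" "B \<in> level k (Suc j)" "A \<subseteq> B" for A B
    using image_mono that by blast
  have ne: "f A \<noteq> f B" if "A \<in> level k j \<or> A \<in> level k (Suc j)"
    "B \<in> level k j \<or> B \<in> level k (Suc j)" "A \<noteq> B" for A B
    using inj_on_eq_iff[OF inj_on_f, of A B] that by blast
  show ?thesis
    unfolding S_def[symmetric]
  proof (rule hexagon_Diff_eq)
    show "finite (f (insert a x))" "finite (f (insert a (insert c S)))" "finite (f (insert c x))"
      using fin upper by blast+
    show "card (f (insert a S)) = i" "card (f x) = i" "card (f (insert c S)) = i"
      using card_lower levels by blast+
    show "card (f (insert a x)) = Suc i" "card (f (insert a (insert c S))) = Suc i"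
      "card (f (insert c x)) = Suc i"
      using card_upper levels by blast+
    have "insert a S \<subseteq> insert a x" "x \<subseteq> insert a x" "insert a S \<subseteq> insert a (insert c S)"
      "insert c S \<subseteq> insert a (insert c S)" "x \<subseteq> insert c x" "insert c S \<subseteq> insert c x"
      unfolding x_eq by blast+
    then show "f (insert a S) \<union> f x \<subseteq> f (insert a x)"
      "f (insert a S) \<union> f (insert c S) \<subseteq> f (insert a (insert c S))"
      "f x \<union> f (insert c S) \<subseteq> f (insert c x)"
      using sub levels by (metis Un_least)+
    have "insert a S \<noteq> x" "insert a S \<noteq> insert c S" "insert a x \<noteq> insert c x"
      using a(2) c(2) \<open>a \<notin> S\<close> \<open>a \<noteq> c\<close> by blast+
    then show "f (insert a S) \<noteq> f x" "f (insert a S) \<noteq> f (insert c S)"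
      "f (insert a x) \<noteq> f (insert c x)"
      using ne levels by blast+
  qed
qed

lemma image_insert_Diff_indep:
  assumes x: "x \<in> level k j" and y: "y \<in> level k j" and a: "a \<in> {1..k}" "a \<notin> x" "a \<notin> y"
  shows "f (insert a x) - f x = f (insert a y) - f y"
proof -
  have y_sub: "y \<subseteq> {1..k}"
    using y by (simp add: level_def)
  have "finite x" "finite y" "card x = card y"
    using finite_level[OF x] finite_level[OF y] x y by (simp_all add: level_def)
  then have "x \<subseteq> {1..k} \<longrightarrow> a \<notin> x \<longrightarrow> f (insert a x) - f x = f (insert a y) - f y"
  proof (induction x rule: same_card_exchange_induct)
    case base
    show ?case by simp
  next
    case (exchange x b c)
    show ?case
    proof (intro impI)
      assume x_sub: "x \<subseteq> {1..k}" and "a \<notin> x"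
      have x: "x \<in> level k j"
        using x_sub exchange(2) y by (simp add: level_def)
      have c: "c \<in> {1..k}" "c \<notin> x" "a \<noteq> c" and b: "b \<in> x"
        using exchange(3,4) y_sub a(3) by blast+
      have "insert c (x - {b}) \<subseteq> {1..k}" "a \<notin> insert c (x - {b})"
        using x_sub c \<open>a \<notin> x\<close> by blast+
      then have "f (insert a (insert c (x - {b}))) - f (insert c (x - {b})) = f (insert a y) - f y"
        using exchange(5) by blast
      with image_insert_Diff_exchange[OF x b a(1) \<open>a \<notin> x\<close> c]
      show "f (insert a x) - f x = f (insert a y) - f y"
        by (rule trans)
    qed
  qed
  then show ?thesis
    using x a(2) by (simp add: level_def)
qed

text \<open>The element \<open>\<sigma> a\<close> that \<open>f\<close> adds along an edge \<open>x \<subset> insert a x\<close>; by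
  \<open>image_insert_Diff_indep\<close> it does not matter which lower set \<open>x\<close> is chosen.\<close>

definition added :: "nat \<Rightarrow> nat" where
  "added a = (let y = SOME y. y \<in> level k j \<and> a \<notin> y in the_elem (f (insert a y) - f y))"

lemma image_insert_lower:
  assumes x: "x \<in> level k j" and a: "a \<in> {1..k}" "a \<notin> x"
  shows "added a \<notin> f x" "f (insert a x) = insert (added a) (f x)"
proof -
  have in_levels: "x \<in> consecutive_levels k j" "insert a x \<in> consecutive_levels k j"
    using x insert_in_level[OF x a] by simp_all
  obtain p where p: "p \<notin> f x" "f (insert a x) = insert p (f x)"
    by (rule image_psubset_eq_insert[OF in_levels]) (use a(2) in blast)
  define y where "y = (SOME y. y \<in> level k j \<and> a \<notin> y)"
  have "{a} \<subseteq> {1..k}" "j + card {a} \<le> k"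
    using a(1) j_less_k by simp_all
  then obtain y' where "y' \<in> level k j" "y' \<inter> {a} = {}"
    by (rule exists_level_disjoint)
  then have "\<exists>y. y \<in> level k j \<and> a \<notin> y"
    by blast
  then have "y \<in> level k j \<and> a \<notin> y"
    unfolding y_def by (rule someI_ex)
  then have y: "y \<in> level k j" "a \<notin> y"
    by simp_all
  have "added a = the_elem (f (insert a x) - f x)"
    unfolding added_def y_def[symmetric] Let_def using image_insert_Diff_indep[OF x y(1) a y(2)] by simp
  also have "f (insert a x) - f x = {p}"
    using p by blast
  finally have "added a = p"
    by simp
  then show "added a \<notin> f x" "f (insert a x) = insert (added a) (f x)"
    using p by simp_all
qed

lemma inj_on_added: "inj_on added {1..k}"
proof (rule inj_onI, rule ccontr)
  fix a b
  assume a: "a \<in> {1..k}" and b: "b \<in> {1..k}" and "added a = added b" "a \<noteq> b"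
  have "card {a, b} \<le> card {1..k}"
    using a b by (intro card_mono) simp_all
  then have "{a, b} \<subseteq> {1..k}" "j + card {a, b} \<le> k"
    using a b below_middle \<open>a \<noteq> b\<close> by simp_all
  then obtain x where x: "x \<in> level k j" "x \<inter> {a, b} = {}"
    by (rule exists_level_disjoint)
  then have "a \<notin> x" "b \<notin> x"
    by blast+
  have "f (insert a x) = f (insert b x)"
    using image_insert_lower(2)[OF x(1) a \<open>a \<notin> x\<close>] image_insert_lower(2)[OF x(1) b \<open>b \<notin> x\<close>]
      \<open>added a = added b\<close> by simp
  moreover have "insert a x \<in> consecutive_levels k j" "insert b x \<in> consecutive_levels k j"
    using insert_in_level[OF x(1) a \<open>a \<notin> x\<close>] insert_in_level[OF x(1) b \<open>b \<notin> x\<close>] by simp_all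
  ultimately have "insert a x = insert b x"
    using inj_on_eq_iff[OF inj_on_f] by blast
  then show False
    using \<open>a \<notin> x\<close> \<open>a \<noteq> b\<close> by blast
qed

lemma added_image_subset:
  assumes x: "x \<in> level k j"
  shows "added ` x \<subseteq> f x"
proof
  fix s
  assume "s \<in> added ` x"
  then obtain a where a: "a \<in> x" "s = added a"
    by blast
  obtain b where b: "b \<in> {1..k}" "b \<notin> x"
    by (rule exists_not_in_level[OF x j_less_k])
  have a_k: "a \<in> {1..k}"
    using x a(1) by (auto simp: level_def)
  have x': "insert b (x - {a}) \<in> level k j" "a \<notin> insert b (x - {a})"
    using exchange_in_level[OF x a(1) b] a(1) b(2) by blast+
  have "insert a (insert b (x - {a})) = insert b x"
    using a(1) by blast
  then have "insert (added a) (f (insert b (x - {a}))) = insert (added b) (f x)"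
    using image_insert_lower(2)[OF x' (1) a_k x'(2)] image_insert_lower(2)[OF x b] by simp
  moreover have "added a \<noteq> added b"
    using inj_on_eq_iff[OF inj_on_added a_k b(1)] a(1) b(2) by blast
  ultimately show "s \<in> f x"
    using a(2) by blast
qed

lemma image_Diff_added_exchange:
  assumes x: "x \<in> level k j" and b: "b \<in> x" and c: "c \<in> {1..k}" "c \<notin> x"
  shows "f (insert c (x - {b})) - added ` insert c (x - {b}) = f x - added ` x"
proof -
  define x' where "x' = insert c (x - {b})"
  have x': "x' \<in> level k j" "b \<notin> x'"
    unfolding x'_def using exchange_in_level[OF x b c] c(2) b by blast+
  have b_k: "b \<in> {1..k}"
    using x b by (auto simp: level_def)
  have "insert b x' = insert c x"
    unfolding x'_def using b by blast
  then have "insert (added b) (f x') = insert (added c) (f x)"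
    using image_insert_lower(2)[OF x'(1) b_k x'(2)] image_insert_lower(2)[OF x c] by simp
  moreover have "f x' = insert (added b) (f x') - {added b}"
    using image_insert_lower(1)[OF x'(1) b_k x'(2)] by simp
  ultimately have fx': "f x' = insert (added c) (f x) - {added b}"
    by simp
  have "added ` x' = insert (added c) (added ` (x - {b}))"
    unfolding x'_def by simp
  then have "f x' - added ` x' = (insert (added c) (f x) - {added b}) - insert (added c) (added ` (x - {b}))"
    unfolding fx' by (rule arg_cong)
  also have "\<dots> = f x - insert (added b) (added ` (x - {b}))"
    using image_insert_lower(1)[OF x c] by blast
  also have "insert (added b) (added ` (x - {b})) = added ` x"
    using b by blast
  finally show ?thesis
    unfolding x'_def .
qed

lemma image_Diff_added_indep:
  assumes x: "x \<in> level k j" and y: "y \<in> level k j"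
  shows "f x - added ` x = f y - added ` y"
proof -
  have y_sub: "y \<subseteq> {1..k}"
    using y by (simp add: level_def)
  have "finite x" "finite y" "card x = card y"
    using finite_level[OF x] finite_level[OF y] x y by (simp_all add: level_def)
  then have "x \<subseteq> {1..k} \<longrightarrow> f x - added ` x = f y - added ` y"
  proof (induction x rule: same_card_exchange_induct)
    case base
    show ?case by simp
  next
    case (exchange x b c)
    show ?case
    proof
      assume x_sub: "x \<subseteq> {1..k}"
      have x: "x \<in> level k j"
        using x_sub exchange(2) y by (simp add: level_def)
      have c: "c \<in> {1..k}" "c \<notin> x" and b: "b \<in> x"
        using exchange(3,4) y_sub by blast+
      have "insert c (x - {b}) \<subseteq> {1..k}"
        using x_sub c by blast
      then have "f (insert c (x - {b})) - added ` insert c (x - {b}) = f y - added ` y"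
        using exchange(5) by blast
      with image_Diff_added_exchange[OF x b c, symmetric]
      show "f x - added ` x = f y - added ` y"
        by (rule trans)
    qed
  qed
  then show ?thesis
    using x by (simp add: level_def)
qed

theorem image_eq_added_Un:
  obtains C where "C \<inter> added ` {1..k} = {}" "\<And>A. A \<in> consecutive_levels k j \<Longrightarrow> f A = added ` A \<union> C"
proof -
  have "{} \<subseteq> {1..k}" "j + card {} \<le> k"
    using j_less_k by simp_all
  then obtain X where X: "X \<in> level k j"
    by (rule exists_level_disjoint)
  define C where "C = f X - added ` X"
  have lower: "f x = added ` x \<union> C" if "x \<in> level k j" for x
    using image_Diff_added_indep[OF that X] added_image_subset[OF that] unfolding C_def by blast
  have upper: "f A = added ` A \<union> C" if A: "A \<in> level k (Suc j)" for A
  proof -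
    have "A \<noteq> {}"
      using A by (auto simp: level_def)
    then obtain a where a: "a \<in> A"
      by blast
    have A': "A - {a} \<in> level k j"
      by (rule Diff_in_level[OF A a])
    have a_k: "a \<in> {1..k}"
      using A a by (auto simp: level_def)
    have "f A = insert (added a) (f (A - {a}))"
      using image_insert_lower(2)[OF A' a_k] a by (simp add: insert_absorb)
    then show ?thesis
      using lower[OF A'] a by blast
  qed
  have "added c \<notin> C" if "c \<in> {1..k}" for c
    using image_insert_lower(1)[OF X that] unfolding C_def by blast
  then have "C \<inter> added ` {1..k} = {}"
    by blast
  then show thesis
    using that lower upper by blast
qed

end

theorem weak_embedding_consecutive_levels_hasse_dist:
  assumes "weak_embedding (consecutive_levels k j) (consecutive_levels n i) f" "2 * j < k"
    and x: "x \<in> consecutive_levels k j" and y: "y \<in> consecutive_levels k j"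
  shows "hasse_dist (consecutive_levels n i) (f x) (f y) = hasse_dist (consecutive_levels k j) x y"
proof -
  interpret consecutive_levels_embedding k j n i f
    using assms(1,2) by unfold_locales
  obtain C where C: "C \<inter> added ` {1..k} = {}" "\<And>A. A \<in> consecutive_levels k j \<Longrightarrow> f A = added ` A \<union> C"
    using image_eq_added_Un by blast
  have sub: "x \<subseteq> {1..k}" "y \<subseteq> {1..k}"
    using x y by (auto simp: level_def)
  have "hasse_dist (consecutive_levels n i) (f x) (f y) = enat (card (sym_diff (f x) (f y)))"
    using hasse_dist_consecutive_levels image_in x y by blast
  also have "\<dots> = enat (card (sym_diff x y))"
    using card_sym_diff_image_Un[OF inj_on_added sub C(1)] C(2) x y by simp
  also have "\<dots> = hasse_dist (consecutive_levels k j) x y"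
    using hasse_dist_consecutive_levels x y by metis
  finally show ?thesis .
qed

theorem mainTheorem8:
  fixes k n :: nat and f :: "nat set \<Rightarrow> nat set"
  assumes "weak_embedding (L2 k) (L2 n) f"
  shows "\<forall>x\<in>L2 k. \<forall>y\<in>L2 k. hasse_dist (L2 k) x y = hasse_dist (L2 n) (f x) (f y)"
proof (cases "k = 0")
  case True
  then have "L2 k = {{}}"
    unfolding L2_eq_consecutive_levels by (auto simp: level_def)
  then show ?thesis
    by simp
next
  case False
  then have "2 * ((k - 1) div 2) < k"
    by simp
  then show ?thesis
    using assms weak_embedding_consecutive_levels_hasse_dist unfolding L2_eq_consecutive_levels by metis
qed

end
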